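(* Let $\Bbbk$ be a field, $n\ge2$, $q\in\Bbbk$ a primitive $n$-th root of unity, $T_n(q)$ the Taft algebra and $A$ a unital associative $\Bbbk$-algebra. Let $\cdot:T_n(q)\otimes A\to A$ be a linear map with $g\cdot1_A\in\{0,1_A\}$ and $x\cdot1_A\in Z(A)$. Then $\cdot$ is a partial action of $T_n(q)$ on $A$ if and only if either $\cdot$ is a global action, or the restriction of $\cdot$ to $\Bbbk C_n\otimes A$ is a partial action of $\Bbbk C_n$ on $A$ with $g\cdot1_A=0$ and, for all $0\le i,j\le n-1$ and $a\in A$: (i) $g^ix^j\cdot a=q^{-ij}(x\cdot1_A)^j\sum_{k=0}^{j}(-1)^kq^{-\frac{k(k-1)}{2}}\binom{j}{k}_{q^{-1}}(g^{i+k}\cdot a)$; (ii) $g^i\cdot(x\cdot1_A)=q^{-i}(g^i\cdot1_A)(x\cdot1_A)$.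
   Context: The Taft algebra $T_n(q)$ is the Hopf algebra generated by $g,x$ with relations $g^n=1$, $x^n=0$, $xg=qgx$, basis $\{g^ix^j\}$, $g$ group-like, $\Delta(x)=x\otimes1+g\otimes x$, $\varepsilon(x)=0$; $\Bbbk C_n=\mathrm{span}\{1,g,\dots,g^{n-1}\}$; exponents of $g$ are read modulo $n$. $Z(A)$ is the center of $A$. A partial action of a bialgebra $H$ on $A$ is a linear map $\cdot:H\otimes A\to A$ with $1_H\cdot a=a$, $h\cdot(ab)=(h_1\cdot a)(h_2\cdot b)$, $h\cdot(k\cdot a)=(h_1\cdot1_A)(h_2k\cdot a)$; it is global if moreover $h\cdot1_A=\varepsilon(h)1_A$ for all $h$. $q$-binomials: $\binom{0}{0}_p=1$, $\binom{N}{m}_p=0$ if $m>N$ or $m<0$, and $\binom{N}{m}_p=\binom{N-1}{m-1}_p+p^m\binom{N-1}{m}_p$ for $N\ge1$, $0\le m\le N$. *)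

theory Defs
  imports Main
begin

definition is_algebra :: "('k::field \<Rightarrow> 'a::ring_1 \<Rightarrow> 'a) \<Rightarrow> bool" where
  "is_algebra sc \<longleftrightarrow>
     (\<forall>c d a. sc (c + d) a = sc c a + sc d a) \<and>
     (\<forall>c a b. sc c (a + b) = sc c a + sc c b) \<and>
     (\<forall>c d a. sc (c * d) a = sc c (sc d a)) \<and>
     (\<forall>a. sc 1 a = a) \<and>
     (\<forall>c a b. sc c (a * b) = sc c a * b) \<and>
     (\<forall>c a b. sc c (a * b) = a * sc c b)"

definition linear_map :: "('k::field \<Rightarrow> 'a::ring_1 \<Rightarrow> 'a) \<Rightarrow> ('a \<Rightarrow> 'a) \<Rightarrow> bool" where
  "linear_map sc f \<longleftrightarrow> (\<forall>a b. f (a + b) = f a + f b) \<and> (\<forall>c a. f (sc c a) = sc c (f a))"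

(* A finite-dimensional bialgebra H is given by a finite basis B, multiplication
   structure constants mu b b' c (coefficient of c in b*b'), comultiplication
   Delta c (b,b') (coefficient of b\<otimes>b' in Delta(c)), unit and counit coefficients.
   Elements of H are coefficient functions 'b \<Rightarrow> 'k (only values on B matter).
   A linear map H\<otimes>A \<rightarrow> A is given by its values act b on the basis (each linear). *)

definition basis_el :: "'b \<Rightarrow> 'b \<Rightarrow> 'k::field" where
  "basis_el b = (\<lambda>c. if c = b then 1 else 0)"

definition hact :: "('k::field \<Rightarrow> 'a::ring_1 \<Rightarrow> 'a) \<Rightarrow> 'b set \<Rightarrow> ('b \<Rightarrow> 'a \<Rightarrow> 'a)
                    \<Rightarrow> ('b \<Rightarrow> 'k) \<Rightarrow> 'a \<Rightarrow> 'a" where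
  "hact sc B act h a = (\<Sum>b\<in>B. sc (h b) (act b a))"

definition hmul :: "'b set \<Rightarrow> ('b \<Rightarrow> 'b \<Rightarrow> 'b \<Rightarrow> 'k::field) \<Rightarrow> ('b \<Rightarrow> 'k) \<Rightarrow> ('b \<Rightarrow> 'k) \<Rightarrow> 'b \<Rightarrow> 'k" where
  "hmul B mu h k = (\<lambda>c. \<Sum>b\<in>B. \<Sum>b'\<in>B. h b * k b' * mu b b' c)"

definition partial_action ::
  "('k::field \<Rightarrow> 'a::ring_1 \<Rightarrow> 'a) \<Rightarrow> 'b set \<Rightarrow> ('b \<Rightarrow> 'b \<Rightarrow> 'b \<Rightarrow> 'k)
   \<Rightarrow> ('b \<Rightarrow> 'b \<times> 'b \<Rightarrow> 'k) \<Rightarrow> ('b \<Rightarrow> 'k) \<Rightarrow> ('b \<Rightarrow> 'a \<Rightarrow> 'a) \<Rightarrow> bool" where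
  "partial_action sc B mu Delta one act \<longleftrightarrow>
     (\<forall>a. hact sc B act one a = a) \<and>
     (\<forall>h a a'. hact sc B act h (a * a') =
        (\<Sum>c\<in>B. \<Sum>b\<in>B. \<Sum>b'\<in>B. sc (h c * Delta c (b, b')) (act b a * act b' a'))) \<and>
     (\<forall>h k a. hact sc B act h (hact sc B act k a) =
        (\<Sum>c\<in>B. \<Sum>b\<in>B. \<Sum>b'\<in>B. sc (h c * Delta c (b, b'))
            (act b 1 * hact sc B act (hmul B mu (basis_el b') k) a)))"

definition global_action ::
  "('k::field \<Rightarrow> 'a::ring_1 \<Rightarrow> 'a) \<Rightarrow> 'b set \<Rightarrow> ('b \<Rightarrow> 'b \<Rightarrow> 'b \<Rightarrow> 'k)
   \<Rightarrow> ('b \<Rightarrow> 'b \<times> 'b \<Rightarrow> 'k) \<Rightarrow> ('b \<Rightarrow> 'k) \<Rightarrow> ('b \<Rightarrow> 'k) \<Rightarrow> ('b \<Rightarrow> 'a \<Rightarrow> 'a) \<Rightarrow> bool" where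
  "global_action sc B mu Delta one eps act \<longleftrightarrow>
     partial_action sc B mu Delta one act \<and>
     (\<forall>h. hact sc B act h 1 = sc (\<Sum>b\<in>B. h b * eps b) 1)"

definition tens_mul :: "'b set \<Rightarrow> ('b \<Rightarrow> 'b \<Rightarrow> 'b \<Rightarrow> 'k::field)
    \<Rightarrow> ('b \<times> 'b \<Rightarrow> 'k) \<Rightarrow> ('b \<times> 'b \<Rightarrow> 'k) \<Rightarrow> 'b \<times> 'b \<Rightarrow> 'k" where
  "tens_mul B mu X Y = (\<lambda>(c, c'). \<Sum>p\<in>B \<times> B. \<Sum>p'\<in>B \<times> B.
      X p * Y p' * mu (fst p) (fst p') c * mu (snd p) (snd p') c')"

(* Taft algebra T_n(q): basis (i,j) <-> g^i x^j, 0 \<le> i,j < n *)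
definition taft_basis :: "nat \<Rightarrow> (nat \<times> nat) set" where
  "taft_basis n = {..<n} \<times> {..<n}"

(* g^i x^j * g^k x^l = q^(jk) g^(i+k) x^(j+l)  (zero if j+l \<ge> n) *)
definition taft_mu :: "nat \<Rightarrow> 'k::field \<Rightarrow> nat \<times> nat \<Rightarrow> nat \<times> nat \<Rightarrow> nat \<times> nat \<Rightarrow> 'k" where
  "taft_mu n q b b' c = (if fst c = (fst b + fst b') mod n \<and> snd c = snd b + snd b'
                          then q ^ (snd b * fst b') else 0)"

definition taft_Dg :: "nat \<Rightarrow> (nat \<times> nat) \<times> (nat \<times> nat) \<Rightarrow> 'k::field" where
  "taft_Dg n = basis_el ((1 mod n, 0), (1 mod n, 0))"

definition taft_Dx :: "nat \<Rightarrow> (nat \<times> nat) \<times> (nat \<times> nat) \<Rightarrow> 'k::field" where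
  "taft_Dx n = (\<lambda>p. (if p = ((0, 1), (0, 0)) then 1 else 0)
                   + (if p = ((1 mod n, 0), (0, 1)) then 1 else 0))"

(* Delta(g^i x^j) = Delta(g)^i Delta(x)^j computed in T\<otimes>T *)
definition taft_Delta :: "nat \<Rightarrow> 'k::field \<Rightarrow> nat \<times> nat \<Rightarrow> (nat \<times> nat) \<times> (nat \<times> nat) \<Rightarrow> 'k" where
  "taft_Delta n q b =
     ((tens_mul (taft_basis n) (taft_mu n q) (taft_Dg n)) ^^ (fst b))
       (((tens_mul (taft_basis n) (taft_mu n q) (taft_Dx n)) ^^ (snd b))
          (basis_el ((0, 0), (0, 0))))"

definition taft_eps :: "nat \<times> nat \<Rightarrow> 'k::field" where
  "taft_eps b = (if snd b = 0 then 1 else 0)"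

(* group algebra k C_n: basis i <-> g^i *)
definition cn_mu :: "nat \<Rightarrow> nat \<Rightarrow> nat \<Rightarrow> nat \<Rightarrow> 'k::field" where
  "cn_mu n i k r = (if r = (i + k) mod n then 1 else 0)"

definition cn_Delta :: "nat \<Rightarrow> nat \<times> nat \<Rightarrow> 'k::field" where
  "cn_Delta c p = (if p = (c, c) then 1 else 0)"

definition primitive_root :: "nat \<Rightarrow> 'k::field \<Rightarrow> bool" where
  "primitive_root n q \<longleftrightarrow> q ^ n = 1 \<and> (\<forall>m. 0 < m \<and> m < n \<longrightarrow> q ^ m \<noteq> 1)"

fun qbinom :: "'k::field \<Rightarrow> nat \<Rightarrow> nat \<Rightarrow> 'k" where
  "qbinom p 0 m = (if m = 0 then 1 else 0)"
| "qbinom p (Suc N) 0 = qbinom p N 0"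
| "qbinom p (Suc N) (Suc m) =
     (if Suc m > Suc N then 0 else qbinom p N m + p ^ Suc m * qbinom p N (Suc m))"

end

theory Submission
  imports Defs HOL.Modules
begin

(*
  Write Delta(g^i x^j) = sum_k [j,k]_q g^(i+k) x^(j-k) (x) g^i x^k.  Evaluated on basis
  elements, the partial-action axioms become a twisted multiplicativity law and a composition
  law for the maps g^m x^l . _  If g.1 = 1, these laws force x.1 = 0 and g^m x^l . 1 = 0 for
  l > 0, so the action is global.  If g.1 = 0, the composition law for g^(-1) x yields the
  recursion
      g^m x^(j+1) . a = q^(-m) (x.1) (g^m x^j . a - g^(m+1) x^j . a),
  which is solved by formula (i); (ii) follows from the composition law for g^m and x and the
  case j = 0 of the recursion.  Conversely, (i), (ii) and the axioms for C_n give back both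
  laws by induction on the degree in x, the induction step being the q-Pascal rule.  The
  truncation x^n = 0 is harmless because for j = n - 1 the coefficients in (i) are q^k, which
  makes g^m x^(n-1) . a independent of m.
*)

section \<open>q-binomial coefficients\<close>

lemma qbinom_0_right [simp]: "qbinom p N 0 = 1"
  by (induction N) auto

lemma qbinom_eq_0: "N < m \<Longrightarrow> qbinom p N m = 0"
proof (induction N arbitrary: m)
  case (Suc N)
  then show ?case by (cases m) auto
qed simp

lemma qbinom_Suc_Suc: "qbinom p (Suc N) (Suc k) = qbinom p N k + p ^ Suc k * qbinom p N (Suc k)"
  by (auto simp: qbinom_eq_0)

declare qbinom.simps(3) [simp del]

lemma qbinom_Suc: "qbinom p (Suc N) k = (if k = 0 then 0 else qbinom p N (k - 1)) + p ^ k * qbinom p N k"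
  by (cases k) (simp_all add: qbinom_Suc_Suc)

lemma qbinom_same [simp]: "qbinom p N N = 1"
  by (induction N) (auto simp: qbinom_Suc_Suc qbinom_eq_0)

lemma qbinom_Suc_Suc_dual: "qbinom p (Suc N) (Suc k) = qbinom p N (Suc k) + p ^ (N - k) * qbinom p N k"
proof (induction N arbitrary: k)
  case 0
  then show ?case by (cases k) (auto simp: qbinom_eq_0)
next
  case (Suc N)
  show ?case
  proof (cases k)
    case 0
    then show ?thesis using Suc.IH[of 0] by (simp add: qbinom_Suc_Suc algebra_simps)
  next
    case (Suc k')
    have pow: "p ^ Suc (Suc k') * (p ^ (N - Suc k') * qbinom p N (Suc k'))
        = p ^ (N - k') * (p ^ Suc k' * qbinom p N (Suc k'))"
    proof (cases "Suc k' \<le> N")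
      case True
      then have "Suc (Suc k') + (N - Suc k') = (N - k') + Suc k'" by simp
      then show ?thesis by (metis power_add mult.assoc)
    qed (simp add: qbinom_eq_0)
    have "qbinom p (Suc (Suc N)) (Suc k) = qbinom p (Suc N) (Suc k') + p ^ Suc (Suc k') * qbinom p (Suc N) (Suc (Suc k'))"
      unfolding Suc by (rule qbinom_Suc_Suc)
    also have "\<dots> = (qbinom p N (Suc k') + p ^ Suc (Suc k') * qbinom p N (Suc (Suc k')))
        + p ^ (N - k') * (qbinom p N k' + p ^ Suc k' * qbinom p N (Suc k'))"
      unfolding Suc.IH[of k'] Suc.IH[of "Suc k'"] distrib_left pow[symmetric] by (simp add: algebra_simps)
    also have "\<dots> = qbinom p (Suc N) (Suc k) + p ^ (Suc N - k) * qbinom p (Suc N) k"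
      unfolding Suc qbinom_Suc_Suc by simp
    finally show ?thesis .
  qed
qed

lemma primitive_root_nonzero: "primitive_root n q \<Longrightarrow> 0 < n \<Longrightarrow> q \<noteq> 0"
  unfolding primitive_root_def by (metis power_0_left zero_neq_one not_gr0)

lemma primitive_root_power_mod: "primitive_root n q \<Longrightarrow> q ^ (m mod n) = q ^ m"
  unfolding primitive_root_def by (metis mult_div_mod_eq power_add power_mult power_one mult_1_left)

lemma inverse_power_mult_power: "(q::'k::field) \<noteq> 0 \<Longrightarrow> inverse q ^ m * q ^ m = 1"
  by (simp add: power_mult_distrib[symmetric])

lemma qbinom_inverse_primitive_root_pred:
  assumes prim: "primitive_root n q" and "k < n"
  shows "qbinom (inverse q) (n - 1) k = (-1) ^ k * q ^ (Suc k * k div 2)"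
  using assms(2)
proof (induction k)
  case (Suc k)
  define p where "p = inverse q"
  have q0: "q \<noteq> 0" using primitive_root_nonzero[OF prim] Suc.prems by simp
  have pq: "p ^ i * q ^ i = 1" for i unfolding p_def using q0 by (rule inverse_power_mult_power)
  have "n - 1 - k + Suc k = n" using Suc.prems by simp
  then have "p ^ (n - 1 - k) * p ^ Suc k = p ^ n" by (metis power_add)
  also have "\<dots> = 1" using prim unfolding p_def primitive_root_def by (simp add: power_inverse)
  finally have "p ^ (n - 1 - k) * (p ^ Suc k * q ^ Suc k) = q ^ Suc k"
    by (simp only: mult.assoc[symmetric] mult_1_left)
  then have pk: "p ^ (n - 1 - k) = q ^ Suc k" by (simp only: pq mult_1_right)
  have "q ^ Suc k \<noteq> 1" using prim Suc.prems unfolding primitive_root_def by blast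
  then have ps: "1 - p ^ Suc k \<noteq> 0" using pq[of "Suc k"] by auto
  have n: "Suc (n - 1) = n" using Suc.prems by simp
  have "(1 - p ^ Suc k) * qbinom p (n - 1) (Suc k) = (1 - q ^ Suc k) * qbinom p (n - 1) k"
    using qbinom_Suc_Suc[of p "n - 1" k] qbinom_Suc_Suc_dual[of p "n - 1" k] unfolding n pk
    by (simp add: algebra_simps)
  also have "\<dots> = (1 - p ^ Suc k) * (- (q ^ Suc k) * qbinom p (n - 1) k)"
    using pq[of "Suc k"] by (simp add: algebra_simps)
  finally have "qbinom p (n - 1) (Suc k) = - (q ^ Suc k) * qbinom p (n - 1) k"
    using ps mult_left_cancel by blast
  moreover have "Suc (Suc k) * Suc k div 2 = Suc k * k div 2 + Suc k" by simp
  ultimately show ?case using Suc by (simp add: p_def power_add)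
qed simp

definition taft_coeff :: "'k::field \<Rightarrow> nat \<Rightarrow> nat \<Rightarrow> 'k" where
  "taft_coeff q j k = (-1) ^ k * inverse q ^ (k * (k - 1) div 2) * qbinom (inverse q) j k"

lemma taft_coeff_0_right [simp]: "taft_coeff q j 0 = 1"
  by (simp add: taft_coeff_def)

lemma taft_coeff_eq_0: "j < k \<Longrightarrow> taft_coeff q j k = 0"
  by (simp add: taft_coeff_def qbinom_eq_0)

lemma taft_coeff_Suc:
  "taft_coeff q (Suc j) k = taft_coeff q j k - (if k = 0 then 0 else inverse q ^ j * taft_coeff q j (k - 1))"
proof (cases k)
  case (Suc k')
  define p where "p = inverse q"
  have "(-1) ^ Suc k' * p ^ (Suc k' * k' div 2) * (p ^ (j - k') * qbinom p j k')
      = - (p ^ j * ((-1) ^ k' * p ^ (k' * (k' - 1) div 2) * qbinom p j k'))"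
  proof (cases "k' \<le> j")
    case True
    then have "Suc k' * k' div 2 + (j - k') = j + k' * (k' - 1) div 2" by (cases k') auto
    then have pow: "p ^ (Suc k' * k' div 2) * p ^ (j - k') = p ^ j * p ^ (k' * (k' - 1) div 2)"
      by (metis power_add)
    have "(-1) ^ Suc k' * p ^ (Suc k' * k' div 2) * (p ^ (j - k') * qbinom p j k')
        = - ((-1) ^ k' * (p ^ (Suc k' * k' div 2) * p ^ (j - k')) * qbinom p j k')"
      by (simp add: mult_ac)
    also have "\<dots> = - (p ^ j * ((-1) ^ k' * p ^ (k' * (k' - 1) div 2) * qbinom p j k'))"
      unfolding pow by (simp add: mult_ac)
    finally show ?thesis .
  qed (simp add: qbinom_eq_0)
  then have "taft_coeff q (Suc j) (Suc k') = taft_coeff q j (Suc k') - p ^ j * taft_coeff q j k'"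
    unfolding taft_coeff_def qbinom_Suc_Suc_dual p_def[symmetric] by (simp add: distrib_left)
  then show ?thesis using Suc by (simp add: p_def)
qed (simp add: taft_coeff_def)

lemma taft_coeff_pred:
  assumes "primitive_root n q" and "k < n"
  shows "taft_coeff q (n - 1) k = q ^ k"
proof -
  have q0: "q \<noteq> 0" using primitive_root_nonzero[OF assms(1)] assms(2) by simp
  have tri: "Suc k * k div 2 = k * (k - 1) div 2 + k" by (cases k) auto
  have "taft_coeff q (n - 1) k
      = ((-1) ^ k * (-1) ^ k) * (inverse q ^ (k * (k - 1) div 2) * q ^ (k * (k - 1) div 2)) * q ^ k"
    unfolding taft_coeff_def qbinom_inverse_primitive_root_pred[OF assms] tri power_add
    by (simp only: mult_ac)
  then show ?thesis
    by (simp add: inverse_power_mult_power[OF q0] power_mult_distrib[symmetric] q0)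
qed

section \<open>Partial actions of a finite-dimensional bialgebra on basis elements\<close>

lemma sum_rotate3: "(\<Sum>x\<in>A. \<Sum>y\<in>A. \<Sum>z\<in>A. f x y z) = (\<Sum>z\<in>A. \<Sum>x\<in>A. \<Sum>y\<in>A. f x y z)"
proof -
  have "(\<Sum>x\<in>A. \<Sum>y\<in>A. \<Sum>z\<in>A. f x y z) = (\<Sum>x\<in>A. \<Sum>z\<in>A. \<Sum>y\<in>A. f x y z)"
    by (rule sum.cong[OF refl], rule sum.swap)
  also have "\<dots> = (\<Sum>z\<in>A. \<Sum>x\<in>A. \<Sum>y\<in>A. f x y z)"
    by (rule sum.swap)
  finally show ?thesis .
qed

locale scalar_algebra =
  fixes sc :: "'k::field \<Rightarrow> 'a::ring_1 \<Rightarrow> 'a"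
  assumes is_algebra: "is_algebra sc"
begin

sublocale module sc
  using is_algebra unfolding is_algebra_def by unfold_locales auto

lemma sc_mult_left: "sc s x * y = sc s (x * y)"
  using is_algebra unfolding is_algebra_def by metis

lemma sc_mult_right: "x * sc s y = sc s (x * y)"
  using is_algebra unfolding is_algebra_def by metis

lemma linear_map_module_hom: "linear_map sc f \<Longrightarrow> module_hom sc sc f"
  unfolding linear_map_def module_hom_iff using module_axioms by blast

lemma sum_sc_basis_el: "finite B \<Longrightarrow> c \<in> B \<Longrightarrow> (\<Sum>c'\<in>B. sc (basis_el c c') (X c')) = X c"
  unfolding basis_el_def by (simp add: if_distrib[of "\<lambda>s. sc s _"] cong: if_cong)

lemma hact_basis_el: "finite B \<Longrightarrow> b \<in> B \<Longrightarrow> hact sc B act (basis_el b) a = act b a"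
  unfolding hact_def by (rule sum_sc_basis_el)

lemma all_sum_sc_eq_iff:
  assumes "finite B"
  shows "(\<forall>h. (\<Sum>c\<in>B. sc (h c) (X c)) = (\<Sum>c\<in>B. sc (h c) (Y c))) \<longleftrightarrow> (\<forall>c\<in>B. X c = Y c)"
  using sum_sc_basis_el[OF assms, of _ X] sum_sc_basis_el[OF assms, of _ Y]
  by (metis (mono_tags, lifting) sum.cong)

lemma hact_hmul_basis_el:
  assumes "finite B" and "b \<in> B"
  shows "hact sc B act (hmul B mu (basis_el b) k) a = (\<Sum>d\<in>B. sc (k d) (\<Sum>e\<in>B. sc (mu b d e) (act e a)))"
proof -
  have "hmul B mu (basis_el b) k e = (\<Sum>c\<in>B. basis_el b c * (\<Sum>d\<in>B. k d * mu c d e))" for e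
    unfolding hmul_def by (simp add: sum_distrib_left mult.assoc)
  then have "hmul B mu (basis_el b) k = (\<lambda>e. \<Sum>d\<in>B. k d * mu b d e)"
    using assms unfolding basis_el_def by (auto simp: if_distrib[of "\<lambda>s. s * _"] cong: if_cong)
  then have "hact sc B act (hmul B mu (basis_el b) k) a = (\<Sum>e\<in>B. \<Sum>d\<in>B. sc (k d) (sc (mu b d e) (act e a)))"
    unfolding hact_def by (simp add: scale_sum_left)
  also have "\<dots> = (\<Sum>d\<in>B. sc (k d) (\<Sum>e\<in>B. sc (mu b d e) (act e a)))"
    by (subst sum.swap) (simp add: scale_sum_right)
  finally show ?thesis .
qed

lemma sum_sc_pull_scalar:
  "(\<Sum>c\<in>B. \<Sum>b\<in>B. \<Sum>b'\<in>B. sc (h c * d c b b') (X c b b'))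
    = (\<Sum>c\<in>B. sc (h c) (\<Sum>b\<in>B. \<Sum>b'\<in>B. sc (d c b b') (X c b b')))"
  by (simp add: scale_sum_right)

lemma partial_action_mult_iff_basis:
  assumes "finite B"
  shows "(\<forall>h a a'. hact sc B act h (a * a') =
        (\<Sum>c\<in>B. \<Sum>b\<in>B. \<Sum>b'\<in>B. sc (h c * Delta c (b, b')) (act b a * act b' a')))
    \<longleftrightarrow> (\<forall>c\<in>B. \<forall>a a'. act c (a * a') = (\<Sum>b\<in>B. \<Sum>b'\<in>B. sc (Delta c (b, b')) (act b a * act b' a')))"
  unfolding hact_def sum_sc_pull_scalar
  by (subst all_comm, subst (2) all_comm, simp only: all_sum_sc_eq_iff[OF assms]) blast

lemma partial_action_comp_iff_basis:
  assumes fin: "finite B" and lin: "\<forall>b\<in>B. linear_map sc (act b)"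
  shows "(\<forall>h k a. hact sc B act h (hact sc B act k a) =
        (\<Sum>c\<in>B. \<Sum>b\<in>B. \<Sum>b'\<in>B. sc (h c * Delta c (b, b'))
            (act b 1 * hact sc B act (hmul B mu (basis_el b') k) a)))
    \<longleftrightarrow> (\<forall>c\<in>B. \<forall>d\<in>B. \<forall>a. act c (act d a) =
        (\<Sum>b\<in>B. \<Sum>b'\<in>B. sc (Delta c (b, b')) (act b 1 * (\<Sum>e\<in>B. sc (mu b' d e) (act e a)))))"
    (is "_ \<longleftrightarrow> (\<forall>c\<in>B. \<forall>d\<in>B. \<forall>a. _ = ?R c d a)")
proof -
  have act_hact: "act c (hact sc B act k a) = (\<Sum>d\<in>B. sc (k d) (act c (act d a)))" if "c \<in> B" for c k a
  proof -
    have "module_hom sc sc (act c)" using lin that linear_map_module_hom by blast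
    then show ?thesis unfolding hact_def by (simp add: module_hom.sum module_hom.scale)
  qed
  have R_hmul: "(\<Sum>b\<in>B. \<Sum>b'\<in>B. sc (Delta c (b, b')) (act b 1 * hact sc B act (hmul B mu (basis_el b') k) a))
      = (\<Sum>d\<in>B. sc (k d) (?R c d a))" for c k a
  proof -
    have "(\<Sum>b\<in>B. \<Sum>b'\<in>B. sc (Delta c (b, b')) (act b 1 * hact sc B act (hmul B mu (basis_el b') k) a))
        = (\<Sum>b\<in>B. \<Sum>b'\<in>B. \<Sum>d\<in>B.
            sc (k d) (sc (Delta c (b, b')) (act b 1 * (\<Sum>e\<in>B. sc (mu b' d e) (act e a)))))"
      using fin by (simp add: hact_hmul_basis_el sum_distrib_left sc_mult_right scale_sum_right mult_ac)
    also have "\<dots> = (\<Sum>d\<in>B. sc (k d) (?R c d a))"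
      unfolding scale_sum_right by (rule sum_rotate3)
    finally show ?thesis .
  qed
  have "(\<forall>h k a. hact sc B act h (hact sc B act k a) =
        (\<Sum>c\<in>B. \<Sum>b\<in>B. \<Sum>b'\<in>B. sc (h c * Delta c (b, b'))
            (act b 1 * hact sc B act (hmul B mu (basis_el b') k) a)))
     \<longleftrightarrow> (\<forall>c\<in>B. \<forall>k a. (\<Sum>d\<in>B. sc (k d) (act c (act d a))) = (\<Sum>d\<in>B. sc (k d) (?R c d a)))"
    unfolding hact_def[of sc B act _ "hact sc B act _ _"] sum_sc_pull_scalar R_hmul
    by (subst all_comm, subst (2) all_comm, simp only: all_sum_sc_eq_iff[OF fin])
      (use act_hact in \<open>auto simp: hact_def\<close>)
  also have "\<dots> \<longleftrightarrow> (\<forall>c\<in>B. \<forall>d\<in>B. \<forall>a. act c (act d a) = ?R c d a)"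
    by (subst all_comm, simp only: all_sum_sc_eq_iff[OF fin]) blast
  finally show ?thesis .
qed

lemma partial_action_iff_basis:
  assumes fin: "finite B" and b0: "b0 \<in> B" and lin: "\<forall>b\<in>B. linear_map sc (act b)"
  shows "partial_action sc B mu Delta (basis_el b0) act \<longleftrightarrow>
    (\<forall>a. act b0 a = a) \<and>
    (\<forall>c\<in>B. \<forall>a a'. act c (a * a') = (\<Sum>b\<in>B. \<Sum>b'\<in>B. sc (Delta c (b, b')) (act b a * act b' a'))) \<and>
    (\<forall>c\<in>B. \<forall>d\<in>B. \<forall>a. act c (act d a) =
        (\<Sum>b\<in>B. \<Sum>b'\<in>B. sc (Delta c (b, b')) (act b 1 * (\<Sum>e\<in>B. sc (mu b' d e) (act e a)))))"
  unfolding partial_action_def hact_basis_el[OF fin b0] partial_action_mult_iff_basis[OF fin]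
    partial_action_comp_iff_basis[OF fin lin] ..

lemma global_action_iff_basis:
  assumes "finite B"
  shows "global_action sc B mu Delta one eps act \<longleftrightarrow>
    partial_action sc B mu Delta one act \<and> (\<forall>b\<in>B. act b 1 = sc (eps b) 1)"
proof -
  have "sc (\<Sum>b\<in>B. h b * eps b) 1 = (\<Sum>b\<in>B. sc (h b) (sc (eps b) 1))" for h
    by (simp add: scale_sum_left)
  then show ?thesis
    unfolding global_action_def hact_def by (simp only: all_sum_sc_eq_iff[OF assms])
qed

end

section \<open>The comultiplication of the Taft algebra\<close>

lemma tens_mul_basis_el:
  assumes "finite B" and "u \<in> B" and "v \<in> B"
  shows "tens_mul B mu (basis_el (u, v)) Y (c, c') = (\<Sum>p\<in>B \<times> B. Y p * mu u (fst p) c * mu v (snd p) c')"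
proof -
  have "tens_mul B mu (basis_el (u, v)) Y (c, c')
      = (\<Sum>p0\<in>B \<times> B. basis_el (u, v) p0 * (\<Sum>p\<in>B \<times> B. Y p * mu (fst p0) (fst p) c * mu (snd p0) (snd p) c'))"
    unfolding tens_mul_def by (simp add: sum_distrib_left mult.assoc)
  then show ?thesis
    using assms unfolding basis_el_def by (simp add: if_distrib[of "\<lambda>s. s * _"] cong: if_cong)
qed

lemma tens_mul_add_left:
  "tens_mul B mu (\<lambda>p. X p + X' p) Y c = tens_mul B mu X Y c + tens_mul B mu X' Y c"
  unfolding tens_mul_def by (simp add: distrib_right sum.distrib split: prod.split)

lemma sum_times_delta_pair:
  assumes "finite A" and "u \<in> A" and "v \<in> A"
  shows "(\<Sum>p\<in>A \<times> A. Y p * (if fst p = u then s else 0) * (if snd p = v then t else 0))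
    = Y (u, v) * s * (t :: 'k::semiring_0)"
proof -
  have "(\<Sum>p\<in>A \<times> A. Y p * (if fst p = u then s else 0) * (if snd p = v then t else 0))
      = (\<Sum>p\<in>A \<times> A. if p = (u, v) then Y (u, v) * s * t else 0)"
    by (rule sum.cong) auto
  then show ?thesis using assms by simp
qed

locale taft_params =
  fixes n :: nat and q :: "'k::field"
  assumes n_ge_2: "2 \<le> n"
begin

abbreviation tmul :: "((nat \<times> nat) \<times> nat \<times> nat \<Rightarrow> 'k) \<Rightarrow> ((nat \<times> nat) \<times> nat \<times> nat \<Rightarrow> 'k)
    \<Rightarrow> (nat \<times> nat) \<times> nat \<times> nat \<Rightarrow> 'k" where
  "tmul \<equiv> tens_mul (taft_basis n) (taft_mu n q)"

lemma finite_taft_basis [simp]: "finite (taft_basis n)"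
  unfolding taft_basis_def by simp

lemma mem_taft_basis [simp]: "(i, j) \<in> taft_basis n \<longleftrightarrow> i < n \<and> j < n"
  unfolding taft_basis_def by simp

lemma mod_pred_eq_iff:
  assumes "a < n" and "k < n"
  shows "a = (k + n - 1) mod n \<longleftrightarrow> k = (a + 1) mod n"
proof -
  have "(k + n - 1) mod n = (if k = 0 then n - 1 else k - 1)"
  proof (cases "k = 0")
    case False
    then have "k + n - 1 = (k - 1) + n" by simp
    then show ?thesis using False assms(2) by (metis mod_add_self2 mod_less less_imp_diff_less)
  qed (use assms in simp)
  moreover have "(a + 1) mod n = (if a + 1 = n then 0 else a + 1)" using assms(1) by simp
  ultimately show ?thesis using assms by (auto split: if_splits)
qed

lemma taft_mu_unit_left: "x \<in> taft_basis n \<Longrightarrow> taft_mu n q (0, 0) x c = (if x = c then 1 else 0)"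
  unfolding taft_mu_def taft_basis_def by (cases x; cases c) auto

lemma taft_mu_g_left:
  assumes "x \<in> taft_basis n" and "k < n"
  shows "taft_mu n q (1, 0) x (k, l) = (if x = ((k + n - 1) mod n, l) then 1 else 0)"
proof -
  obtain a b where x: "x = (a, b)" and "a < n" using assms(1) by (cases x) auto
  have "taft_mu n q (1, 0) (a, b) (k, l) = (if k = (a + 1) mod n \<and> l = b then 1 else 0)"
    unfolding taft_mu_def by (simp add: add.commute)
  then show ?thesis using mod_pred_eq_iff[OF \<open>a < n\<close> assms(2)] x by auto
qed

lemma taft_mu_x_left:
  assumes "x \<in> taft_basis n" and "k < n"
  shows "taft_mu n q (0, 1) x (k, l) = (if x = (k, l - 1) then (if 0 < l then q ^ k else 0) else 0)"
  using assms unfolding taft_mu_def taft_basis_def by auto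

lemma add_mod_cancel_right:
  assumes "x < n" and "y < n"
  shows "(x + i) mod n = (y + i) mod n \<longleftrightarrow> x = y"
proof
  assume "(x + i) mod n = (y + i) mod n"
  then have "n dvd nat \<bar>int x - int y\<bar>" unfolding mod_eq_iff_dvd_symdiff_nat by simp
  moreover have "nat \<bar>int x - int y\<bar> < n" using assms by simp
  ultimately have "nat \<bar>int x - int y\<bar> = 0" using nat_dvd_not_less by blast
  then show "x = y" by simp
qed simp

lemma one_mod_n: "1 mod n = 1"
  using n_ge_2 by simp

lemma tmul_taft_Dg:
  assumes "k < n" and "k' < n" and "l < n" and "l' < n"
  shows "tmul (taft_Dg n) Y (((k + 1) mod n, l), ((k' + 1) mod n, l')) = Y ((k, l), (k', l'))"
proof -
  have mu_g: "taft_mu n q (1, 0) x ((j + 1) mod n, m) = (if x = (j, m) then 1 else 0)"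
    if "x \<in> taft_basis n" and "j < n" for x j m
    using taft_mu_g_left[OF that(1), of "(j + 1) mod n" m] mod_pred_eq_iff[OF that(2), of "(j + 1) mod n"]
      n_ge_2 by simp
  have g: "(1, 0) \<in> taft_basis n" using n_ge_2 by simp
  have "tmul (taft_Dg n) Y (((k + 1) mod n, l), ((k' + 1) mod n, l'))
      = (\<Sum>p\<in>taft_basis n \<times> taft_basis n.
          Y p * taft_mu n q (1, 0) (fst p) ((k + 1) mod n, l) * taft_mu n q (1, 0) (snd p) ((k' + 1) mod n, l'))"
    unfolding taft_Dg_def one_mod_n by (rule tens_mul_basis_el[OF finite_taft_basis g g])
  also have "\<dots> = (\<Sum>p\<in>taft_basis n \<times> taft_basis n.
          Y p * (if fst p = (k, l) then 1 else 0) * (if snd p = (k', l') then 1 else 0))"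
  proof (intro sum.cong refl)
    fix p assume "p \<in> taft_basis n \<times> taft_basis n"
    then have "fst p \<in> taft_basis n" and "snd p \<in> taft_basis n" by auto
    then show "Y p * taft_mu n q (1, 0) (fst p) ((k + 1) mod n, l) * taft_mu n q (1, 0) (snd p) ((k' + 1) mod n, l')
        = Y p * (if fst p = (k, l) then 1 else 0) * (if snd p = (k', l') then 1 else 0)"
      by (simp only: mu_g assms)
  qed
  also have "\<dots> = Y ((k, l), (k', l'))"
    using assms by (subst sum_times_delta_pair) auto
  finally show ?thesis .
qed

lemma tmul_taft_Dg_iter:
  assumes "k < n" and "k' < n" and "l < n" and "l' < n"
  shows "(tmul (taft_Dg n) ^^ i) Y (((k + i) mod n, l), ((k' + i) mod n, l')) = Y ((k, l), (k', l'))"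
proof (induction i)
  case (Suc i)
  have "(k + Suc i) mod n = ((k + i) mod n + 1) mod n" and "(k' + Suc i) mod n = ((k' + i) mod n + 1) mod n"
    by (simp_all add: mod_Suc_eq)
  then have "(tmul (taft_Dg n) ^^ Suc i) Y (((k + Suc i) mod n, l), ((k' + Suc i) mod n, l'))
      = tmul (taft_Dg n) ((tmul (taft_Dg n) ^^ i) Y) ((((k + i) mod n + 1) mod n, l), (((k' + i) mod n + 1) mod n, l'))"
    by simp
  also have "\<dots> = (tmul (taft_Dg n) ^^ i) Y (((k + i) mod n, l), ((k' + i) mod n, l'))"
    using n_ge_2 assms by (intro tmul_taft_Dg) auto
  finally show ?case using Suc.IH by simp
qed (use assms in simp)

lemma tmul_taft_Dx:
  assumes "k1 < n" and "k2 < n" and "l1 < n" and "l2 < n"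
  shows "tmul (taft_Dx n) Y ((k1, l1), (k2, l2))
    = Y ((k1, l1 - 1), (k2, l2)) * (if 0 < l1 then q ^ k1 else 0)
      + Y (((k1 + n - 1) mod n, l1), (k2, l2 - 1)) * (if 0 < l2 then q ^ k2 else 0)"
proof -
  let ?B2 = "taft_basis n \<times> taft_basis n"
  have g: "(1, 0) \<in> taft_basis n" and x: "(0, 1) \<in> taft_basis n" and e: "(0, 0) \<in> taft_basis n"
    using n_ge_2 by simp_all
  have Dx: "taft_Dx n = (\<lambda>p. basis_el ((0, 1), (0, 0)) p + basis_el ((1, 0), (0, 1)) p)"
    unfolding taft_Dx_def basis_el_def one_mod_n ..
  have "tmul (taft_Dx n) Y ((k1, l1), (k2, l2))
      = (\<Sum>p\<in>?B2. Y p * taft_mu n q (0, 1) (fst p) (k1, l1) * taft_mu n q (0, 0) (snd p) (k2, l2))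
      + (\<Sum>p\<in>?B2. Y p * taft_mu n q (1, 0) (fst p) (k1, l1) * taft_mu n q (0, 1) (snd p) (k2, l2))"
    unfolding Dx tens_mul_add_left by (simp only: tens_mul_basis_el[OF finite_taft_basis] g x e)
  also have "\<dots> = (\<Sum>p\<in>?B2. Y p * (if fst p = (k1, l1 - 1) then (if 0 < l1 then q ^ k1 else 0) else 0)
                                  * (if snd p = (k2, l2) then 1 else 0))
      + (\<Sum>p\<in>?B2. Y p * (if fst p = ((k1 + n - 1) mod n, l1) then 1 else 0)
                      * (if snd p = (k2, l2 - 1) then (if 0 < l2 then q ^ k2 else 0) else 0))"
    using assms by (intro arg_cong2[where f = "(+)"] sum.cong refl)
      (auto simp only: mem_Times_iff taft_mu_unit_left taft_mu_x_left taft_mu_g_left)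
  also have "\<dots> = Y ((k1, l1 - 1), (k2, l2)) * (if 0 < l1 then q ^ k1 else 0)
      + Y (((k1 + n - 1) mod n, l1), (k2, l2 - 1)) * (if 0 < l2 then q ^ k2 else 0)"
    using assms n_ge_2 by (simp add: sum_times_delta_pair)
  finally show ?thesis .
qed

lemma tmul_taft_Dx_iter:
  assumes "a < n" and "b < n" and "l1 < n" and "l2 < n"
  shows "(tmul (taft_Dx n) ^^ j) (basis_el ((0, 0), (0, 0))) ((a, l1), (b, l2))
    = (if b = 0 \<and> l1 + l2 = j \<and> a = l2 then qbinom q j l2 else 0)"
  using assms
proof (induction j arbitrary: a b l1 l2)
  case 0
  then show ?case unfolding basis_el_def by auto
next
  case (Suc j)
  let ?X = "(tmul (taft_Dx n) ^^ j) (basis_el ((0, 0), (0, 0)))"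
  define r where "r = (a + n - 1) mod n"
  have "r < n" using n_ge_2 unfolding r_def by simp
  have shift: "l2 - 1 = r \<longleftrightarrow> a = l2" if "0 < l2"
    using mod_pred_eq_iff[of "l2 - 1" a] that Suc.prems unfolding r_def by auto
  have "(tmul (taft_Dx n) ^^ Suc j) (basis_el ((0, 0), (0, 0))) ((a, l1), (b, l2))
      = ?X ((a, l1 - 1), (b, l2)) * (if 0 < l1 then q ^ a else 0)
        + ?X ((r, l1), (b, l2 - 1)) * (if 0 < l2 then q ^ b else 0)"
    using Suc.prems unfolding r_def by (simp add: tmul_taft_Dx)
  also have "\<dots> = (if b = 0 \<and> l1 - 1 + l2 = j \<and> a = l2 then qbinom q j l2 else 0) * (if 0 < l1 then q ^ a else 0)
        + (if b = 0 \<and> l1 + (l2 - 1) = j \<and> l2 - 1 = r then qbinom q j (l2 - 1) else 0)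
          * (if 0 < l2 then q ^ b else 0)"
    using Suc.prems \<open>r < n\<close> by (simp add: Suc.IH)
  also have "\<dots> = (if b = 0 \<and> l1 + l2 = Suc j \<and> a = l2 then qbinom q (Suc j) l2 else 0)"
  proof (cases "b = 0 \<and> l1 + l2 = Suc j \<and> a = l2")
    case True
    then show ?thesis using shift by (cases l1; cases l2) (simp_all add: qbinom_Suc qbinom_eq_0)
  next
    case False
    have "(if b = 0 \<and> l1 - 1 + l2 = j \<and> a = l2 then qbinom q j l2 else 0) * (if 0 < l1 then q ^ a else 0) = 0"
      using False by (cases "0 < l1") auto
    moreover have "(if b = 0 \<and> l1 + (l2 - 1) = j \<and> l2 - 1 = r then qbinom q j (l2 - 1) else 0)
        * (if 0 < l2 then q ^ b else 0) = 0"
      using False shift by (cases "0 < l2") auto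
    ultimately show ?thesis using False by (simp only: if_not_P if_False add_0)
  qed
  finally show ?case .
qed

lemma taft_Delta_eq:
  assumes "i < n" and "a1 < n" and "a2 < n" and "l1 < n" and "l2 < n"
  shows "taft_Delta n q (i, j) ((a1, l1), (a2, l2))
    = (if a2 = i \<and> l1 + l2 = j \<and> a1 = (i + l2) mod n then qbinom q j l2 else 0)"
proof -
  define k1 where "k1 = (a1 + n - i) mod n"
  define k2 where "k2 = (a2 + n - i) mod n"
  have "k1 < n" and "k2 < n" using n_ge_2 unfolding k1_def k2_def by auto
  have a1: "a1 = (k1 + i) mod n" and a2: "a2 = (k2 + i) mod n"
    unfolding k1_def k2_def using assms by (auto simp: mod_add_left_eq)
  have "taft_Delta n q (i, j) ((a1, l1), (a2, l2))
      = (tmul (taft_Dg n) ^^ i) ((tmul (taft_Dx n) ^^ j) (basis_el ((0, 0), (0, 0))))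
          (((k1 + i) mod n, l1), ((k2 + i) mod n, l2))"
    unfolding taft_Delta_def a1 a2 by simp
  also have "\<dots> = (if k2 = 0 \<and> l1 + l2 = j \<and> k1 = l2 then qbinom q j l2 else 0)"
    using \<open>k1 < n\<close> \<open>k2 < n\<close> assms by (simp add: tmul_taft_Dg_iter tmul_taft_Dx_iter)
  also have "\<dots> = (if a2 = i \<and> l1 + l2 = j \<and> a1 = (i + l2) mod n then qbinom q j l2 else 0)"
    using add_mod_cancel_right[OF \<open>k2 < n\<close>, of 0 i] add_mod_cancel_right[OF \<open>k1 < n\<close> \<open>l2 < n\<close>, of i]
      n_ge_2 assms unfolding a1 a2 by (auto simp: add.commute)
  finally show ?thesis .
qed

end

section \<open>Partial actions of the Taft algebra as laws for the generators\<close>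

locale taft_action = scalar_algebra sc + taft_params n q
  for sc :: "'k::field \<Rightarrow> 'a::ring_1 \<Rightarrow> 'a" and n :: nat and q :: 'k +
  fixes act :: "nat \<times> nat \<Rightarrow> 'a \<Rightarrow> 'a"
  assumes prim: "primitive_root n q"
    and lin: "\<forall>b\<in>taft_basis n. linear_map sc (act b)"
begin

lemma sum_taft_Delta:
  assumes i: "i < n" and j: "j < n"
  shows "(\<Sum>b\<in>taft_basis n. \<Sum>b'\<in>taft_basis n. sc (taft_Delta n q (i, j) (b, b')) (\<Phi> b b'))
    = (\<Sum>k = 0..j. sc (qbinom q j k) (\<Phi> ((i + k) mod n, j - k) (i, k)))"
proof -
  let ?T = "\<lambda>l. sc (qbinom q j l) (\<Phi> ((i + l) mod n, j - l) (i, l))"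
  have inner: "(\<Sum>b\<in>taft_basis n. sc (taft_Delta n q (i, j) (b, (a, l))) (\<Phi> b (a, l)))
      = (if a = i \<and> l \<le> j then ?T l else 0)" if "a < n" and "l < n" for a l
  proof -
    have "(\<Sum>b\<in>taft_basis n. sc (taft_Delta n q (i, j) (b, (a, l))) (\<Phi> b (a, l)))
        = (\<Sum>b\<in>taft_basis n. if b = ((i + l) mod n, j - l) then (if a = i \<and> l \<le> j then ?T l else 0) else 0)"
    proof (intro sum.cong refl)
      fix b assume "b \<in> taft_basis n"
      then obtain a1 l1 where "b = (a1, l1)" and "a1 < n" and "l1 < n" by (cases b) auto
      then show "sc (taft_Delta n q (i, j) (b, (a, l))) (\<Phi> b (a, l))
          = (if b = ((i + l) mod n, j - l) then (if a = i \<and> l \<le> j then ?T l else 0) else 0)"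
        using that i by (auto simp: taft_Delta_eq)
    qed
    also have "\<dots> = (if a = i \<and> l \<le> j then ?T l else 0)"
      using j n_ge_2 by (simp add: less_imp_diff_less)
    finally show ?thesis .
  qed
  have "(\<Sum>b\<in>taft_basis n. \<Sum>b'\<in>taft_basis n. sc (taft_Delta n q (i, j) (b, b')) (\<Phi> b b'))
      = (\<Sum>a<n. \<Sum>l<n. \<Sum>b\<in>taft_basis n. sc (taft_Delta n q (i, j) (b, (a, l))) (\<Phi> b (a, l)))"
    by (subst sum.swap) (simp only: taft_basis_def sum.cartesian_product')
  also have "\<dots> = (\<Sum>a<n. if a = i then (\<Sum>l<n. if l \<le> j then ?T l else 0) else 0)"
    by (intro sum.cong refl) (simp add: inner)
  also have "\<dots> = (\<Sum>l\<in>{..<n} \<inter> {0..j}. ?T l)"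
    using i by (simp add: sum.inter_restrict)
  also have "{..<n} \<inter> {0..j} = {0..j}" using j by auto
  finally show ?thesis .
qed

lemma sum_taft_mu:
  "(\<Sum>e\<in>taft_basis n. sc (taft_mu n q (i, k) (i', j') e) (f e))
    = (if k + j' < n then sc (q ^ (k * i')) (f ((i + i') mod n, k + j')) else 0)"
proof -
  have "(\<Sum>e\<in>taft_basis n. sc (taft_mu n q (i, k) (i', j') e) (f e))
      = (\<Sum>e\<in>taft_basis n. if e = ((i + i') mod n, k + j') then sc (q ^ (k * i')) (f e) else 0)"
    by (intro sum.cong refl) (auto simp: taft_mu_def)
  then show ?thesis using n_ge_2 by simp
qed

lemma q_power_mod: "q ^ (m mod n) = q ^ m"
  using primitive_root_power_mod[OF prim] .

lemma q_power_mult_mod: "q ^ (k * (m mod n)) = q ^ (k * m)"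
  by (metis mult.commute power_mult q_power_mod)

lemma q_nonzero: "q \<noteq> 0"
  using primitive_root_nonzero[OF prim] n_ge_2 by simp

lemma q_power_n: "q ^ n = 1"
  using prim unfolding primitive_root_def by blast

lemma inverse_q_power_mult: "inverse q ^ m * q ^ m = 1"
  using inverse_power_mult_power[OF q_nonzero] .

lemma inverse_q_power_mod: "inverse q ^ (m mod n) = inverse q ^ m"
  by (simp add: power_inverse q_power_mod)

lemma all_less_mod: "(\<forall>i<n. P i) \<longleftrightarrow> (\<forall>m. P (m mod n))"
  using n_ge_2 by (metis mod_less mod_less_divisor less_le_trans zero_less_numeral)

lemma ball_lessThan_mod: "(\<forall>i\<in>{..<n}. P i) \<longleftrightarrow> (\<forall>m. P (m mod n))"
  using all_less_mod[of P] by auto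

lemma ball_taft_basis_mod: "(\<forall>c\<in>taft_basis n. P c) \<longleftrightarrow> (\<forall>m. \<forall>j<n. P (m mod n, j))"
  using all_less_mod[of "\<lambda>i. \<forall>j<n. P (i, j)"] unfolding taft_basis_def by auto

definition gx :: "nat \<Rightarrow> nat \<Rightarrow> 'a \<Rightarrow> 'a" where
  "gx m l = act (m mod n, l)"

lemma gx_mod [simp]: "gx (m mod n) l = gx m l"
  by (simp add: gx_def)

lemma gx_add_n [simp]: "gx (m + n) l = gx m l" and gx_n_add [simp]: "gx (n + m) l = gx m l"
  and gx_n [simp]: "gx n l = gx 0 l"
  by (simp_all add: gx_def)

definition x_one :: 'a where
  "x_one = act (0, 1) 1"

lemma gx_0_1_one [simp]: "gx 0 (Suc 0) 1 = x_one"
  by (simp add: gx_def x_one_def)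

lemma module_hom_gx: "l < n \<Longrightarrow> module_hom sc sc (gx m l)"
  using lin n_ge_2 linear_map_module_hom unfolding gx_def by simp

definition taft_mult_law :: bool where
  "taft_mult_law \<longleftrightarrow> (\<forall>m. \<forall>j<n. \<forall>a a'.
     gx m j (a * a') = (\<Sum>k = 0..j. sc (qbinom q j k) (gx (m + k) (j - k) a * gx m k a')))"

(* the action of (g^m x^k)(g^m' x^j') = q^(k m') g^(m+m') x^(k+j'), which is 0 once k + j' >= n *)
definition gx_prod :: "nat \<Rightarrow> nat \<Rightarrow> nat \<Rightarrow> nat \<Rightarrow> 'a \<Rightarrow> 'a" where
  "gx_prod m m' j' k a = (if k + j' < n then sc (q ^ (k * m')) (gx (m + m') (k + j') a) else 0)"

definition taft_comp_law :: bool where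
  "taft_comp_law \<longleftrightarrow> (\<forall>m. \<forall>j<n. \<forall>m'. \<forall>j'<n. \<forall>a.
     gx m j (gx m' j' a) = (\<Sum>k = 0..j. sc (qbinom q j k) (gx (m + k) (j - k) 1 * gx_prod m m' j' k a)))"

definition cn_mult_law :: bool where
  "cn_mult_law \<longleftrightarrow> (\<forall>m a a'. gx m 0 (a * a') = gx m 0 a * gx m 0 a')"

definition cn_comp_law :: bool where
  "cn_comp_law \<longleftrightarrow> (\<forall>m m' a. gx m 0 (gx m' 0 a) = gx m 0 1 * gx (m + m') 0 a)"

lemma partial_action_taft_iff:
  "partial_action sc (taft_basis n) (taft_mu n q) (taft_Delta n q) (basis_el (0, 0)) act
    \<longleftrightarrow> (\<forall>a. gx 0 0 a = a) \<and> taft_mult_law \<and> taft_comp_law"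
proof -
  have "(0, 0) \<in> taft_basis n" using n_ge_2 by simp
  note basis = partial_action_iff_basis[OF finite_taft_basis this lin]
  have "(\<forall>c\<in>taft_basis n. \<forall>a a'. act c (a * a')
      = (\<Sum>b\<in>taft_basis n. \<Sum>b'\<in>taft_basis n. sc (taft_Delta n q c (b, b')) (act b a * act b' a')))
    \<longleftrightarrow> taft_mult_law"
    unfolding taft_mult_law_def gx_def ball_taft_basis_mod
    using n_ge_2 by (simp add: sum_taft_Delta mod_add_left_eq)
  moreover have "(\<forall>c\<in>taft_basis n. \<forall>d\<in>taft_basis n. \<forall>a. act c (act d a)
      = (\<Sum>b\<in>taft_basis n. \<Sum>b'\<in>taft_basis n. sc (taft_Delta n q c (b, b'))
          (act b 1 * (\<Sum>e\<in>taft_basis n. sc (taft_mu n q b' d e) (act e a)))))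
    \<longleftrightarrow> taft_comp_law"
    unfolding taft_comp_law_def gx_prod_def gx_def ball_taft_basis_mod
    using n_ge_2 by (simp add: sum_taft_Delta sum_taft_mu mod_add_left_eq) (simp only: mod_add_eq q_power_mult_mod)
  ultimately show ?thesis
    unfolding basis by (simp add: gx_def)
qed

lemma partial_action_cn_iff:
  "partial_action sc {..<n} (cn_mu n) cn_Delta (basis_el 0) (\<lambda>i. act (i, 0))
    \<longleftrightarrow> (\<forall>a. gx 0 0 a = a) \<and> cn_mult_law \<and> cn_comp_law"
proof -
  have "0 \<in> {..<n}" and "\<forall>i\<in>{..<n}. linear_map sc (act (i, 0))"
    using n_ge_2 lin by auto
  note basis = partial_action_iff_basis[OF finite_lessThan this]
  have Delta: "(\<Sum>b<n. \<Sum>b'<n. sc (cn_Delta c (b, b')) (\<Phi> b b')) = \<Phi> c c" if "c < n" for c \<Phi>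
  proof -
    have "(\<Sum>b<n. \<Sum>b'<n. sc (cn_Delta c (b, b')) (\<Phi> b b'))
        = (\<Sum>b<n. if b = c then (\<Sum>b'<n. if b' = c then \<Phi> c c else 0) else 0)"
      unfolding cn_Delta_def by (intro sum.cong refl) (auto simp: if_distrib[of "\<lambda>s. sc s _"] cong: if_cong)
    then show ?thesis using that by simp
  qed
  have mu: "(\<Sum>e<n. sc (cn_mu n b d e) (f e)) = f ((b + d) mod n)" for b d f
    using n_ge_2 unfolding cn_mu_def by (simp add: if_distrib[of "\<lambda>s. sc s _"] cong: if_cong)
  show ?thesis
    unfolding basis cn_mult_law_def cn_comp_law_def gx_def ball_lessThan_mod
    using n_ge_2 by (simp add: Delta mu mod_add_eq)
qed

lemma global_action_taft_iff:
  "global_action sc (taft_basis n) (taft_mu n q) (taft_Delta n q) (basis_el (0, 0)) taft_eps act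
    \<longleftrightarrow> partial_action sc (taft_basis n) (taft_mu n q) (taft_Delta n q) (basis_el (0, 0)) act
        \<and> (\<forall>m. \<forall>l<n. gx m l 1 = (if l = 0 then 1 else 0))"
  unfolding global_action_iff_basis[OF finite_taft_basis] ball_taft_basis_mod taft_eps_def gx_def
  by simp

lemma gx_pred_n_add_Suc [simp]: "gx (n - 1 + Suc m) l = gx m l"
  and gx_pred_n_add_1 [simp]: "gx (n - 1 + 1) l = gx 0 l"
proof -
  have "n - 1 + Suc m = m + n" and "n - 1 + 1 = n" using n_ge_2 by simp_all
  then show "gx (n - 1 + Suc m) l = gx m l" and "gx (n - 1 + 1) l = gx 0 l" by simp_all
qed

lemma taft_mult_law_0: "taft_mult_law \<Longrightarrow> gx m 0 (a * a') = gx m 0 a * gx m 0 a'"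
  unfolding taft_mult_law_def using n_ge_2 by auto

lemma taft_mult_law_1:
  "taft_mult_law \<Longrightarrow> gx m 1 (a * a') = gx m 1 a * gx m 0 a' + gx (m + 1) 0 a * gx m 1 a'"
  unfolding taft_mult_law_def using n_ge_2 by (auto simp: numeral_eq_Suc)

lemma taft_comp_law_0: "taft_comp_law \<Longrightarrow> j' < n \<Longrightarrow> gx m 0 (gx m' j' a) = gx m 0 1 * gx (m + m') j' a"
  unfolding taft_comp_law_def gx_prod_def using n_ge_2 by auto

lemma taft_comp_law_1:
  "taft_comp_law \<Longrightarrow> j' < n \<Longrightarrow> gx m 1 (gx m' j' a) = gx m 1 1 * gx (m + m') j' a
    + gx (m + 1) 0 1 * (if 1 + j' < n then sc (q ^ m') (gx (m + m') (1 + j') a) else 0)"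
  unfolding taft_comp_law_def gx_prod_def using n_ge_2 by (auto simp: numeral_eq_Suc)

lemma gx_one_eq_counit:
  assumes unit: "\<forall>a. gx 0 0 a = a" and mult: taft_mult_law and comp: taft_comp_law
    and g_one: "gx 1 0 1 = 1" and "l < n"
  shows "gx m l 1 = (if l = 0 then 1 else 0)"
proof -
  have "x_one = x_one + x_one"
    using taft_mult_law_1[OF mult, of 0 1 1] unit g_one by simp
  then have x_one: "x_one = 0" by simp
  have g_pow: "gx m 0 1 = 1" for m
  proof (induction m)
    case (Suc m)
    then show ?case using taft_comp_law_0[OF comp, of 0 1 m 1] n_ge_2 g_one by simp
  qed (use unit in simp)
  have x_pow: "gx 0 l 1 = 0" if "0 < l" "l < n" for l
    using that
  proof (induction l rule: nat_induct_non_zero)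
    case (Suc l)
    have "gx 0 1 (gx 0 l 1) = 0" using Suc module_hom.zero[OF module_hom_gx] n_ge_2 by simp
    then show ?case using taft_comp_law_1[OF comp, of l 0 0 1] Suc x_one g_one by simp
  qed (use x_one in simp)
  show ?thesis
  proof (cases "l = 0")
    case False
    then have "gx m 0 (gx 0 l 1) = 0" using x_pow \<open>l < n\<close> module_hom.zero[OF module_hom_gx] by simp
    then show ?thesis using taft_comp_law_0[OF comp \<open>l < n\<close>, of m 0 1] g_pow False by simp
  qed (simp add: g_pow)
qed

lemma cn_mult_law_if_taft_mult_law: "taft_mult_law \<Longrightarrow> cn_mult_law"
  unfolding cn_mult_law_def using taft_mult_law_0 by blast

lemma cn_comp_law_if_taft_comp_law: "taft_comp_law \<Longrightarrow> cn_comp_law"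
  unfolding cn_comp_law_def using taft_comp_law_0 n_ge_2 by simp

end

section \<open>The recurrence in the degree of x and its solution\<close>

lemma sum_periodic_shift:
  fixes g :: "nat \<Rightarrow> 'a::ab_group_add"
  assumes periodic: "\<And>t. g (t + n) = g t" and "0 < n"
  shows "(\<Sum>k = 0..n - 1. g (Suc r + k)) = (\<Sum>k = 0..n - 1. g (r + k))"
proof -
  obtain N where N: "n = Suc N" using \<open>0 < n\<close> gr0_implies_Suc by blast
  have "g (r + 0) + (\<Sum>k = 0..N. g (r + Suc k)) = (\<Sum>k = 0..N. g (r + k)) + g (r + Suc N)"
    using sum.atLeast0_atMost_Suc_shift[of "\<lambda>k. g (r + k)" N] sum.atLeast0_atMost_Suc[of "\<lambda>k. g (r + k)" N]
    by simp
  moreover have "g (r + Suc N) = g (r + 0)" using periodic[of r] N by simp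
  ultimately show ?thesis using N by simp
qed

context scalar_algebra
begin

lemma sum_taft_coeff_Suc:
  "(\<Sum>k = 0..Suc j. sc (taft_coeff q (Suc j) k) (f k))
    = (\<Sum>k = 0..j. sc (taft_coeff q j k) (f k)) - sc (inverse q ^ j) (\<Sum>k = 0..j. sc (taft_coeff q j k) (f (Suc k)))"
proof -
  have "(\<Sum>k = 0..Suc j. sc (taft_coeff q (Suc j) k) (f k))
      = (\<Sum>k = 0..Suc j. sc (taft_coeff q j k) (f k))
        - (\<Sum>k = 0..Suc j. sc (if k = 0 then 0 else inverse q ^ j * taft_coeff q j (k - 1)) (f k))"
    unfolding taft_coeff_Suc scale_left_diff_distrib by (rule sum_subtractf)
  also have "(\<Sum>k = 0..Suc j. sc (taft_coeff q j k) (f k)) = (\<Sum>k = 0..j. sc (taft_coeff q j k) (f k))"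
    by (simp add: taft_coeff_eq_0)
  also have "(\<Sum>k = 0..Suc j. sc (if k = 0 then 0 else inverse q ^ j * taft_coeff q j (k - 1)) (f k))
      = sc (inverse q ^ j) (\<Sum>k = 0..j. sc (taft_coeff q j k) (f (Suc k)))"
    unfolding sum.atLeast0_atMost_Suc_shift by (simp add: scale_sum_right)
  finally show ?thesis .
qed

end

context taft_action
begin

definition closed_form :: "nat \<Rightarrow> nat \<Rightarrow> 'a \<Rightarrow> 'a" where
  "closed_form m j a = sc (inverse q ^ (m * j))
     (x_one ^ j * (\<Sum>k = 0..j. sc (taft_coeff q j k) (gx (m + k) 0 a)))"

definition x_recurrence :: bool where
  "x_recurrence \<longleftrightarrow> (\<forall>m j a. Suc j < n \<longrightarrow>
     gx m (Suc j) a = sc (inverse q ^ m) (x_one * (gx m j a - gx (Suc m) j a)))"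

lemma x_recurrenceD:
  "x_recurrence \<Longrightarrow> Suc j < n \<Longrightarrow> gx m (Suc j) a = sc (inverse q ^ m) (x_one * (gx m j a - gx (Suc m) j a))"
  unfolding x_recurrence_def by blast

lemma closed_form_0 [simp]: "closed_form m 0 a = gx m 0 a"
  by (simp add: closed_form_def)

lemma closed_form_Suc:
  "closed_form m (Suc j) a = sc (inverse q ^ m) (x_one * (closed_form m j a - closed_form (Suc m) j a))"
proof -
  let ?p = "inverse q"
  let ?S = "\<lambda>m. \<Sum>k = 0..j. sc (taft_coeff q j k) (gx (m + k) 0 a)"
  have S: "(\<Sum>k = 0..Suc j. sc (taft_coeff q (Suc j) k) (gx (m + k) 0 a)) = ?S m - sc (?p ^ j) (?S (Suc m))"
    using sum_taft_coeff_Suc[where j = j and f = "\<lambda>k. gx (m + k) 0 a"] by simp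
  have p1: "?p ^ (m * Suc j) = ?p ^ m * ?p ^ (m * j)"
    and p2: "?p ^ (m * j) * ?p ^ j = ?p ^ (Suc m * j)"
    by (simp_all add: power_add algebra_simps)
  have "closed_form m (Suc j) a
      = sc (?p ^ (m * Suc j)) (x_one ^ Suc j * ?S m) - sc (?p ^ (m * Suc j) * ?p ^ j) (x_one ^ Suc j * ?S (Suc m))"
    unfolding closed_form_def S by (simp only: right_diff_distrib scale_right_diff_distrib sc_mult_right scale_scale)
  also have "\<dots> = sc (?p ^ m * ?p ^ (m * j)) (x_one * (x_one ^ j * ?S m))
      - sc (?p ^ m * ?p ^ (Suc m * j)) (x_one * (x_one ^ j * ?S (Suc m)))"
    by (simp only: p1 mult.assoc p2 power_Suc)
  also have "\<dots> = sc (?p ^ m) (x_one * (closed_form m j a - closed_form (Suc m) j a))"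
    unfolding closed_form_def by (simp only: right_diff_distrib scale_right_diff_distrib sc_mult_right scale_scale)
  finally show ?thesis .
qed

lemma closed_form_iff_x_recurrence: "(\<forall>m. \<forall>j<n. \<forall>a. gx m j a = closed_form m j a) \<longleftrightarrow> x_recurrence"
proof
  assume closed: "\<forall>m. \<forall>j<n. \<forall>a. gx m j a = closed_form m j a"
  show x_recurrence unfolding x_recurrence_def
  proof (intro allI impI)
    fix m j a assume "Suc j < n"
    then have "gx m (Suc j) a = closed_form m (Suc j) a" and "gx m j a = closed_form m j a"
      and "gx (Suc m) j a = closed_form (Suc m) j a"
      using closed by auto
    then show "gx m (Suc j) a = sc (inverse q ^ m) (x_one * (gx m j a - gx (Suc m) j a))"
      by (simp only: closed_form_Suc)
  qed
next
  assume rec: x_recurrence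
  have "gx m j a = closed_form m j a" if "j < n" for m j a
    using that
  proof (induction j arbitrary: m)
    case (Suc j)
    then have "gx m (Suc j) a = sc (inverse q ^ m) (x_one * (gx m j a - gx (Suc m) j a))"
      using x_recurrenceD[OF rec] by blast
    then show ?case using Suc by (simp only: closed_form_Suc Suc_lessD)
  qed simp
  then show "\<forall>m. \<forall>j<n. \<forall>a. gx m j a = closed_form m j a" by blast
qed

lemma closed_form_mod [simp]: "closed_form (m mod n) j a = closed_form m j a"
proof -
  have p: "inverse q ^ (m mod n * j) = inverse q ^ (m * j)"
    by (simp only: power_mult inverse_q_power_mod)
  have g: "gx (m mod n + k) l = gx (m + k) l" for k l
  proof -
    have "gx (m mod n + k) l = gx ((m mod n + k) mod n) l" by (rule gx_mod[symmetric])
    also have "\<dots> = gx (m + k) l" by (simp only: mod_add_left_eq gx_mod)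
    finally show ?thesis .
  qed
  show ?thesis unfolding closed_form_def p g ..
qed

lemma closed_form_top_Suc: "closed_form (Suc m) (n - 1) a = closed_form m (n - 1) a"
proof -
  define g where "g t = sc (q ^ t) (gx t 0 a)" for t
  have periodic: "g (t + n) = g t" for t
    unfolding g_def by (simp add: power_add q_power_n)
  have "0 < n" using n_ge_2 by simp
  note shift = sum_periodic_shift[of g n, OF periodic this]
  have top: "closed_form r (n - 1) a = x_one ^ (n - 1) * (\<Sum>k = 0..n - 1. g (r + k))" for r
  proof -
    have "r * (n - 1) + r = n * r" using n_ge_2 by (simp add: algebra_simps)
    then have "inverse q ^ (r * (n - 1)) * inverse q ^ r = (inverse q ^ n) ^ r"
      by (metis power_add power_mult)
    then have inv: "inverse q ^ (r * (n - 1)) * inverse q ^ r = 1"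
      by (simp add: power_inverse q_power_n)
    have "inverse q ^ (r * (n - 1)) = inverse q ^ (r * (n - 1)) * (inverse q ^ r * q ^ r)"
      by (simp only: inverse_q_power_mult mult_1_right)
    also have "\<dots> = q ^ r" by (simp only: mult.assoc[symmetric] inv mult_1_left)
    finally have pr: "inverse q ^ (r * (n - 1)) = q ^ r" .
    have coeff: "(\<Sum>k = 0..n - 1. sc (taft_coeff q (n - 1) k) (gx (r + k) 0 a))
        = (\<Sum>k = 0..n - 1. sc (q ^ k) (gx (r + k) 0 a))"
    proof (intro sum.cong refl)
      fix k assume "k \<in> {0..n - 1}"
      then have "k < n" using n_ge_2 by auto
      then show "sc (taft_coeff q (n - 1) k) (gx (r + k) 0 a) = sc (q ^ k) (gx (r + k) 0 a)"
        by (simp only: taft_coeff_pred[OF prim])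
    qed
    have "closed_form r (n - 1) a = sc (q ^ r) (x_one ^ (n - 1) * (\<Sum>k = 0..n - 1. sc (q ^ k) (gx (r + k) 0 a)))"
      unfolding closed_form_def pr coeff ..
    also have "\<dots> = x_one ^ (n - 1) * (\<Sum>k = 0..n - 1. sc (q ^ r) (sc (q ^ k) (gx (r + k) 0 a)))"
      by (simp only: scale_sum_right[symmetric] sc_mult_right)
    also have "\<dots> = x_one ^ (n - 1) * (\<Sum>k = 0..n - 1. g (r + k))"
      unfolding g_def by (simp only: scale_scale power_add)
    finally show ?thesis .
  qed
  show ?thesis unfolding top shift ..
qed

lemma gx_top_Suc_if_x_recurrence:
  assumes rec: x_recurrence
  shows "gx (Suc m) (n - 1) a = gx m (n - 1) a"
proof -
  have "n - 1 < n" using n_ge_2 by simp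
  then show ?thesis
    using rec closed_form_top_Suc unfolding closed_form_iff_x_recurrence[symmetric] by simp
qed

lemma gx_prod_Suc:
  assumes rec: x_recurrence
  shows "gx_prod m m' j' (Suc k) a = sc (inverse q ^ m) (x_one * (gx_prod m m' j' k a - gx_prod (Suc m) m' j' k a))"
proof (cases "Suc k + j' < n")
  case True
  let ?Z = "gx (m + m') (k + j') a - gx (Suc (m + m')) (k + j') a"
  have "q ^ m' * inverse q ^ m' = 1" using inverse_q_power_mult[of m'] by (simp add: mult.commute)
  then have scalar: "q ^ (Suc k * m') * inverse q ^ (m + m') = q ^ (k * m') * inverse q ^ m"
    by (simp add: power_add algebra_simps)
  have "gx_prod m m' j' (Suc k) a = sc (q ^ (Suc k * m')) (sc (inverse q ^ (m + m')) (x_one * ?Z))"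
    unfolding gx_prod_def using True x_recurrenceD[OF rec, of "k + j'" "m + m'" a] by simp
  also have "\<dots> = sc (q ^ (k * m') * inverse q ^ m) (x_one * ?Z)"
    by (simp only: scale_scale scalar)
  also have "\<dots> = sc (inverse q ^ m) (x_one * (gx_prod m m' j' k a - gx_prod (Suc m) m' j' k a))"
    unfolding gx_prod_def using True
    by (simp add: sc_mult_right scale_right_diff_distrib right_diff_distrib mult.commute)
  finally show ?thesis .
next
  case False
  show ?thesis
  proof (cases "k + j' < n")
    case True
    \<comment> \<open>x^(k+j'+1) = 0 here; the recurrence is consistent with this by \<open>closed_form_top_Suc\<close>\<close>
    with False have "k + j' = n - 1" by simp
    then show ?thesis
      unfolding gx_prod_def using True False gx_top_Suc_if_x_recurrence[OF rec, of "m + m'"] by simp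
  qed (use False in \<open>simp add: gx_prod_def\<close>)
qed

lemma formula_i_iff_closed_form:
  "(\<forall>i<n. \<forall>j<n. \<forall>a. act (i, j) a =
      sc (inverse q ^ (i * j))
        (act (0, 1) 1 ^ j *
         (\<Sum>k = 0..j. sc ((- 1) ^ k * inverse q ^ (k * (k - 1) div 2) * qbinom (inverse q) j k)
                         (act ((i + k) mod n, 0) a))))
    \<longleftrightarrow> (\<forall>m. \<forall>j<n. \<forall>a. gx m j a = closed_form m j a)"
proof -
  have "closed_form i j a = sc (inverse q ^ (i * j))
        (act (0, 1) 1 ^ j *
         (\<Sum>k = 0..j. sc ((- 1) ^ k * inverse q ^ (k * (k - 1) div 2) * qbinom (inverse q) j k)
                         (act ((i + k) mod n, 0) a)))" for i j a
    unfolding closed_form_def taft_coeff_def gx_def x_one_def ..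
  then have "(\<forall>i<n. \<forall>j<n. \<forall>a. act (i, j) a =
      sc (inverse q ^ (i * j))
        (act (0, 1) 1 ^ j *
         (\<Sum>k = 0..j. sc ((- 1) ^ k * inverse q ^ (k * (k - 1) div 2) * qbinom (inverse q) j k)
                         (act ((i + k) mod n, 0) a))))
    \<longleftrightarrow> (\<forall>i<n. \<forall>j<n. \<forall>a. gx i j a = closed_form i j a)"
    by (simp add: gx_def)
  also have "\<dots> \<longleftrightarrow> (\<forall>m. \<forall>j<n. \<forall>a. gx m j a = closed_form m j a)"
    using all_less_mod[of "\<lambda>i. \<forall>j<n. \<forall>a. gx i j a = closed_form i j a"] by simp
  finally show ?thesis .
qed

lemma formula_ii_iff:
  "(\<forall>i<n. act (i, 0) (act (0, 1) 1) = sc (inverse q ^ i) (act (i, 0) 1 * act (0, 1) 1))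
    \<longleftrightarrow> (\<forall>m. gx m 0 x_one = sc (inverse q ^ m) (gx m 0 1 * x_one))"
  unfolding all_less_mod gx_def x_one_def by (simp add: inverse_q_power_mod)

end

section \<open>Central x.1\<close>

locale taft_central_action = taft_action +
  assumes central: "\<forall>a. act (0, 1) 1 * a = a * act (0, 1) 1"
begin

lemma x_one_commute: "x_one * a = a * x_one"
  using central by (simp add: x_one_def)

lemma x_one_left_commute: "a * (x_one * b) = x_one * (a * b)"
  by (metis x_one_commute mult.assoc)

lemma gx_pred_1:
  assumes unit: "\<forall>a. gx 0 0 a = a" and mult: taft_mult_law and comp: taft_comp_law
    and g_zero: "gx 1 0 1 = 0"
  shows "gx (n - 1) 1 b = - sc q (x_one * b)"
proof -
  have zero: "gx m l 0 = 0" if "l < n" for m l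
    using module_hom.zero[OF module_hom_gx[OF that]] .
  have "gx (n - 1) 0 (gx 1 0 1) = gx (n - 1) 0 1 * gx (n - 1 + 1) 0 1"
    using taft_comp_law_0[OF comp, of 0 "n - 1" 1 1] n_ge_2 by simp
  then have g_pred: "gx (n - 1) 0 1 = 0"
    using g_zero unit zero n_ge_2 by simp
  have "gx (n - 1) 1 (gx 1 0 1) = gx (n - 1) 1 1 * gx (n - 1 + 1) 0 1
      + gx (n - 1 + 1) 0 1 * sc q x_one"
    using taft_comp_law_1[OF comp, of 0 "n - 1" 1 1] n_ge_2 by simp
  then have gx_pred_one: "gx (n - 1) 1 1 = - sc q x_one"
    using g_zero unit zero n_ge_2 by (simp add: eq_neg_iff_add_eq_0)
  have "gx (n - 1) 1 (b * 1) = gx (n - 1) 1 b * gx (n - 1) 0 1 + gx (n - 1 + 1) 0 b * gx (n - 1) 1 1"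
    using taft_mult_law_1[OF mult] .
  then have "gx (n - 1) 1 b = - sc q (b * x_one)"
    using g_pred gx_pred_one unit n_ge_2 by (simp add: sc_mult_right)
  then show ?thesis by (subst x_one_commute)
qed

lemma x_recurrence_if_partial:
  assumes unit: "\<forall>a. gx 0 0 a = a" and mult: taft_mult_law and comp: taft_comp_law
    and g_zero: "gx 1 0 1 = 0"
  shows x_recurrence
  unfolding x_recurrence_def
proof (intro allI impI)
  fix m j a assume j: "Suc j < n"
  \<comment> \<open>the composition law for g^(-1) x acting after g^(m+1) x^j\<close>
  have "gx (n - 1) 1 (gx (Suc m) j a) = gx (n - 1) 1 1 * gx (n - 1 + Suc m) j a
      + gx (n - 1 + 1) 0 1 * (if 1 + j < n then sc (q ^ Suc m) (gx (n - 1 + Suc m) (1 + j) a) else 0)"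
    using taft_comp_law_1[OF comp, of j "n - 1" "Suc m" a] j by simp
  then have "- sc q (x_one * gx (Suc m) j a) = - sc q (x_one * gx m j a) + sc (q ^ Suc m) (gx m (Suc j) a)"
    using gx_pred_1[OF assms] unit j by (simp add: sc_mult_left)
  then have "sc (q ^ Suc m) (gx m (Suc j) a) = sc q (x_one * (gx m j a - gx (Suc m) j a))"
    by (simp add: algebra_simps)
  then have "sc (inverse q ^ Suc m) (sc (q ^ Suc m) (gx m (Suc j) a))
      = sc (inverse q ^ Suc m) (sc q (x_one * (gx m j a - gx (Suc m) j a)))"
    by simp
  moreover have "inverse q ^ Suc m * q ^ Suc m = 1" and "inverse q ^ Suc m * q = inverse q ^ m"
    using q_nonzero by (simp_all only: inverse_q_power_mult) (simp add: mult.commute mult.left_commute)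
  ultimately show "gx m (Suc j) a = sc (inverse q ^ m) (x_one * (gx m j a - gx (Suc m) j a))"
    by (simp only: scale_scale scale_one)
qed

lemma gx_x_one_if_partial:
  assumes unit: "\<forall>a. gx 0 0 a = a" and mult: taft_mult_law and comp: taft_comp_law
    and g_zero: "gx 1 0 1 = 0"
  shows "gx m 0 x_one = sc (inverse q ^ m) (gx m 0 1 * x_one)"
proof -
  let ?e = "gx m 0 1"
  have "gx m (Suc 0) 1 = sc (inverse q ^ m) (x_one * (?e - gx (Suc m) 0 1))"
    using n_ge_2 by (intro x_recurrenceD x_recurrence_if_partial[OF assms]) simp
  then have rec: "gx m 1 1 = sc (inverse q ^ m) (x_one * (?e - gx (Suc m) 0 1))"
    by (simp only: One_nat_def)
  have idem: "?e * ?e = ?e" using taft_mult_law_0[OF mult, of m 1 1] by simp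
  have "gx m 0 (gx 1 0 1) = ?e * gx (m + 1) 0 1"
    using taft_comp_law_0[OF comp, of 0 m 1 1] n_ge_2 by simp
  then have orth: "?e * gx (Suc m) 0 1 = 0"
    using g_zero module_hom.zero[OF module_hom_gx] n_ge_2 by simp
  have "gx m 0 x_one = ?e * gx m 1 1"
    using taft_comp_law_0[OF comp, of 1 m 0 1] n_ge_2 by simp
  also have "\<dots> = sc (inverse q ^ m) (?e * (x_one * (?e - gx (Suc m) 0 1)))"
    unfolding rec by (rule sc_mult_right)
  also have "\<dots> = sc (inverse q ^ m) (x_one * (?e * ?e - ?e * gx (Suc m) 0 1))"
    by (subst x_one_left_commute) (simp only: right_diff_distrib)
  also have "\<dots> = sc (inverse q ^ m) (?e * x_one)"
    unfolding idem orth diff_zero by (subst x_one_commute) (rule refl)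
  finally show ?thesis .
qed

lemma convolution_recurrence_term:
  assumes U: "\<And>r l. Suc l < n \<Longrightarrow> U r (Suc l) = sc (inverse q ^ r) (x_one * (U r l - U (Suc r) l))"
    and W: "W m (Suc k) = sc (inverse q ^ m) (x_one * (W m k - W (Suc m) k))"
    and "k \<le> j" and "Suc j < n"
  shows "sc (q ^ k * qbinom q j k) (U (m + k) (Suc j - k) * W m k)
      + sc (qbinom q j k) (U (m + Suc k) (Suc j - Suc k) * W m (Suc k))
    = sc (qbinom q j k * inverse q ^ m)
        (x_one * (U (m + k) (j - k) * W m k) - x_one * (U (Suc m + k) (j - k) * W (Suc m) k))"
proof -
  let ?U1 = "U (m + k) (j - k)" and ?U2 = "U (Suc m + k) (j - k)"
  let ?W1 = "W m k" and ?W2 = "W (Suc m) k"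
  have "Suc j - k = Suc (j - k)" and "Suc (j - k) < n" using assms(3,4) by auto
  then have U1: "U (m + k) (Suc j - k) = sc (inverse q ^ (m + k)) (x_one * (?U1 - ?U2))"
    using U[of "j - k" "m + k"] by simp
  have scalar: "q ^ k * qbinom q j k * inverse q ^ (m + k) = qbinom q j k * inverse q ^ m"
    using inverse_q_power_mult[of k] by (simp add: power_add algebra_simps)
  have "sc (q ^ k * qbinom q j k) (U (m + k) (Suc j - k) * ?W1)
      = sc (qbinom q j k * inverse q ^ m) (x_one * (?U1 * ?W1) - x_one * (?U2 * ?W1))"
    unfolding U1 sc_mult_left scale_scale scalar by (simp add: algebra_simps)
  moreover have "sc (qbinom q j k) (U (m + Suc k) (Suc j - Suc k) * W m (Suc k))
      = sc (qbinom q j k * inverse q ^ m) (x_one * (?U2 * ?W1) - x_one * (?U2 * ?W2))"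
    unfolding W sc_mult_right scale_scale by (simp add: algebra_simps x_one_left_commute)
  ultimately show ?thesis by (simp add: scale_right_distrib[symmetric])
qed

lemma convolution_recurrence:
  assumes j: "Suc j < n"
    and U: "\<And>r l. Suc l < n \<Longrightarrow> U r (Suc l) = sc (inverse q ^ r) (x_one * (U r l - U (Suc r) l))"
    and W: "\<And>k. k \<le> j \<Longrightarrow> W m (Suc k) = sc (inverse q ^ m) (x_one * (W m k - W (Suc m) k))"
  shows "(\<Sum>k = 0..Suc j. sc (qbinom q (Suc j) k) (U (m + k) (Suc j - k) * W m k))
    = sc (inverse q ^ m) (x_one * ((\<Sum>k = 0..j. sc (qbinom q j k) (U (m + k) (j - k) * W m k))
        - (\<Sum>k = 0..j. sc (qbinom q j k) (U (Suc m + k) (j - k) * W (Suc m) k))))"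
proof -
  let ?X = "\<lambda>k. U (m + k) (Suc j - k) * W m k"
  let ?D = "\<lambda>k. x_one * (U (m + k) (j - k) * W m k) - x_one * (U (Suc m + k) (j - k) * W (Suc m) k)"
  have "(\<Sum>k = 0..Suc j. sc (qbinom q (Suc j) k) (?X k))
      = (\<Sum>k = 0..Suc j. sc (q ^ k * qbinom q j k) (?X k))
        + (\<Sum>k = 0..Suc j. sc (if k = 0 then 0 else qbinom q j (k - 1)) (?X k))"
    unfolding qbinom_Suc[of q j] scale_left_distrib sum.distrib by (simp add: add.commute)
  also have "(\<Sum>k = 0..Suc j. sc (q ^ k * qbinom q j k) (?X k)) = (\<Sum>k = 0..j. sc (q ^ k * qbinom q j k) (?X k))"
    by (simp add: qbinom_eq_0)
  also have "(\<Sum>k = 0..Suc j. sc (if k = 0 then 0 else qbinom q j (k - 1)) (?X k))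
      = (\<Sum>k = 0..j. sc (qbinom q j k) (?X (Suc k)))"
    by (simp only: sum.atLeast0_atMost_Suc_shift) simp
  also have "(\<Sum>k = 0..j. sc (q ^ k * qbinom q j k) (?X k)) + (\<Sum>k = 0..j. sc (qbinom q j k) (?X (Suc k)))
      = (\<Sum>k = 0..j. sc (qbinom q j k * inverse q ^ m) (?D k))"
    unfolding sum.distrib[symmetric]
    by (intro sum.cong refl convolution_recurrence_term[where U = U and W = W, OF U]) (use j W in auto)
  also have "\<dots> = sc (inverse q ^ m) (x_one * ((\<Sum>k = 0..j. sc (qbinom q j k) (U (m + k) (j - k) * W m k))
        - (\<Sum>k = 0..j. sc (qbinom q j k) (U (Suc m + k) (j - k) * W (Suc m) k))))"
    by (simp add: scale_sum_right sum_distrib_left sc_mult_right scale_right_diff_distrib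
        right_diff_distrib sum_subtractf mult.commute)
  finally show ?thesis .
qed

lemma taft_mult_law_if_x_recurrence:
  assumes cn_mult: cn_mult_law and rec: x_recurrence
  shows taft_mult_law
  unfolding taft_mult_law_def
proof (intro allI impI)
  fix m j a a' assume "j < n"
  then show "gx m j (a * a') = (\<Sum>k = 0..j. sc (qbinom q j k) (gx (m + k) (j - k) a * gx m k a'))"
  proof (induction j arbitrary: m)
    case 0
    then show ?case using cn_mult unfolding cn_mult_law_def by simp
  next
    case (Suc j)
    have "gx m (Suc j) (a * a') = sc (inverse q ^ m) (x_one * (gx m j (a * a') - gx (Suc m) j (a * a')))"
      using x_recurrenceD[OF rec Suc.prems] .
    also have "\<dots> = sc (inverse q ^ m) (x_one * ((\<Sum>k = 0..j. sc (qbinom q j k) (gx (m + k) (j - k) a * gx m k a'))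
        - (\<Sum>k = 0..j. sc (qbinom q j k) (gx (Suc m + k) (j - k) a * gx (Suc m) k a'))))"
      using Suc by simp
    also have "\<dots> = (\<Sum>k = 0..Suc j. sc (qbinom q (Suc j) k) (gx (m + k) (Suc j - k) a * gx m k a'))"
      using Suc.prems by (intro convolution_recurrence[symmetric] x_recurrenceD[OF rec]) auto
    finally show ?case .
  qed
qed

lemma taft_comp_law_0_if_x_recurrence:
  assumes cn_mult: cn_mult_law and cn_comp: cn_comp_law and rec: x_recurrence
    and g_x_one: "\<forall>m. gx m 0 x_one = sc (inverse q ^ m) (gx m 0 1 * x_one)"
    and "j' < n"
  shows "gx m 0 (gx m' j' a) = gx m 0 1 * gx (m + m') j' a"
  using \<open>j' < n\<close>
proof (induction j' arbitrary: m')
  case 0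
  then show ?case using cn_comp unfolding cn_comp_law_def by simp
next
  case (Suc j')
  let ?e = "gx m 0 1" and ?Z = "gx (m + m') j' a - gx (Suc (m + m')) j' a"
  have hom: "module_hom sc sc (gx m 0)" using module_hom_gx n_ge_2 by simp
  have idem: "?e * ?e = ?e" using cn_mult unfolding cn_mult_law_def by (metis mult_1_left)
  have "gx m 0 (gx m' (Suc j') a) = gx m 0 (sc (inverse q ^ m') (x_one * (gx m' j' a - gx (Suc m') j' a)))"
    using x_recurrenceD[OF rec Suc.prems] by simp
  also have "\<dots> = sc (inverse q ^ m') (gx m 0 x_one * (gx m 0 (gx m' j' a) - gx m 0 (gx (Suc m') j' a)))"
    using cn_mult unfolding cn_mult_law_def by (simp add: module_hom.scale[OF hom] module_hom.diff[OF hom])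
  also have "\<dots> = sc (inverse q ^ m') (sc (inverse q ^ m) (?e * x_one) * (?e * ?Z))"
    using Suc g_x_one by (simp add: right_diff_distrib)
  also have "\<dots> = sc (inverse q ^ m' * inverse q ^ m) ((?e * ?e) * (x_one * ?Z))"
    by (simp add: sc_mult_left mult.assoc x_one_left_commute)
  also have "\<dots> = ?e * sc (inverse q ^ (m + m')) (x_one * ?Z)"
    unfolding idem by (simp add: sc_mult_right power_add mult.commute)
  also have "\<dots> = ?e * gx (m + m') (Suc j') a"
    using x_recurrenceD[OF rec Suc.prems] by simp
  finally show ?case .
qed

lemma taft_comp_law_if_x_recurrence:
  assumes cn_mult: cn_mult_law and cn_comp: cn_comp_law and rec: x_recurrence
    and g_x_one: "\<forall>m. gx m 0 x_one = sc (inverse q ^ m) (gx m 0 1 * x_one)"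
  shows taft_comp_law
proof -
  have "gx m j (gx m' j' a) = (\<Sum>k = 0..j. sc (qbinom q j k) (gx (m + k) (j - k) 1 * gx_prod m m' j' k a))"
    if "j < n" and "j' < n" for m j m' j' a
    using that
  proof (induction j arbitrary: m)
    case 0
    then show ?case using taft_comp_law_0_if_x_recurrence[OF assms] by (simp add: gx_prod_def)
  next
    case (Suc j)
    let ?y = "gx m' j' a"
    have "gx m (Suc j) ?y = sc (inverse q ^ m) (x_one * (gx m j ?y - gx (Suc m) j ?y))"
      using x_recurrenceD[OF rec Suc.prems(1)] .
    also have "\<dots> = sc (inverse q ^ m) (x_one * ((\<Sum>k = 0..j. sc (qbinom q j k) (gx (m + k) (j - k) 1 * gx_prod m m' j' k a))
        - (\<Sum>k = 0..j. sc (qbinom q j k) (gx (Suc m + k) (j - k) 1 * gx_prod (Suc m) m' j' k a))))"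
      using Suc by simp
    also have "\<dots> = (\<Sum>k = 0..Suc j. sc (qbinom q (Suc j) k) (gx (m + k) (Suc j - k) 1 * gx_prod m m' j' k a))"
      using Suc.prems
      by (intro convolution_recurrence[symmetric] x_recurrenceD[OF rec] gx_prod_Suc[OF rec]) auto
    finally show ?case .
  qed
  then show ?thesis unfolding taft_comp_law_def by blast
qed

end

theorem corollary3p12:
  fixes sc :: "'k::field \<Rightarrow> 'a::ring_1 \<Rightarrow> 'a" and n :: nat and q :: 'k
    and act :: "nat \<times> nat \<Rightarrow> 'a \<Rightarrow> 'a"
  assumes alg: "is_algebra sc"
    and n2: "n \<ge> 2"
    and prim: "primitive_root n q"
    and lin: "\<forall>b\<in>taft_basis n. linear_map sc (act b)"
    and g1: "act (1, 0) 1 = 0 \<or> act (1, 0) 1 = 1"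
    and x1: "\<forall>a. act (0, 1) 1 * a = a * act (0, 1) 1"
  shows "partial_action sc (taft_basis n) (taft_mu n q) (taft_Delta n q) (basis_el (0, 0)) act
     \<longleftrightarrow>
     (global_action sc (taft_basis n) (taft_mu n q) (taft_Delta n q) (basis_el (0, 0)) taft_eps act
      \<or> (partial_action sc {..<n} (cn_mu n) cn_Delta (basis_el 0) (\<lambda>i. act (i, 0))
         \<and> act (1, 0) 1 = 0
         \<and> (\<forall>i<n. \<forall>j<n. \<forall>a. act (i, j) a =
               sc (inverse q ^ (i * j))
                 (act (0, 1) 1 ^ j *
                  (\<Sum>k = 0..j. sc ((- 1) ^ k * inverse q ^ (k * (k - 1) div 2) * qbinom (inverse q) j k)
                                  (act ((i + k) mod n, 0) a))))
         \<and> (\<forall>i<n. act (i, 0) (act (0, 1) 1) = sc (inverse q ^ i) (act (i, 0) 1 * act (0, 1) 1))))"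
proof -
  interpret taft_central_action sc n q act
    by unfold_locales (use alg n2 prim lin x1 in auto)
  have g: "act (1, 0) 1 = gx 1 0 1"
    using n2 by (simp add: gx_def)
  show ?thesis
    unfolding global_action_taft_iff partial_action_taft_iff partial_action_cn_iff
      formula_i_iff_closed_form formula_ii_iff closed_form_iff_x_recurrence g
    using g1[unfolded g] gx_one_eq_counit cn_mult_law_if_taft_mult_law cn_comp_law_if_taft_comp_law
      x_recurrence_if_partial gx_x_one_if_partial
      taft_mult_law_if_x_recurrence taft_comp_law_if_x_recurrence
    by blast
qed

end
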